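(* Let $n\ge4$, let $C=\mathrm{circ}(1,0,\ldots,0,1)$ of order $n-1$, and let $X=2(CC^T+I_{n-1})^{-1}\left[ (n-1)I_{n-1}-J_{n-1}\right]$ and $Y= J_{n-1}+C^TX$ (these are the blocks of the Moore–Penrose inverse $M^+=\frac{1}{2(n-1)}\left[\begin{smallmatrix}2\mathbf{1} & X\\ -\mathbf{1} & Y\end{smallmatrix}\right]$ of the incidence matrix $M=\left[\begin{smallmatrix}\mathbf{1}^T & \mathbf{0}^T\\ I_{n-1} & C\end{smallmatrix}\right]$ of the wheel graph $W_n$). Then $X$ is a symmetric circulant matrix and $Y$ is a circulant matrix.
   Context: For $c_0,\dots,c_{k-1}$, $\mathrm{circ}(c_0,\ldots,c_{k-1})$ denotes the $k\times k$ circulant matrix whose $(i,j)$-entry is $c_{(j-i)\bmod k}$. $J_{n-1}$ is the $(n-1)\times(n-1)$ all-ones matrix, $I_{n-1}$ the identity, $\mathbf 1$ the all-ones vector. The matrix $CC^T+I_{n-1}=\mathrm{circ}(3,1,0,\ldots,0,1)$ is invertible. The wheel graph $W_n$ is a cycle on $n-1$ vertices together with a hub vertex adjacent to all cycle vertices. *)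

theory Defs
  imports "Jordan_Normal_Form.Gauss_Jordan_Elimination"
begin

definition circ :: "nat \<Rightarrow> (nat \<Rightarrow> 'a) \<Rightarrow> 'a mat" where
  "circ k c = mat k k (\<lambda>(i,j). c ((j + k - i) mod k))"

definition circulant :: "'a mat \<Rightarrow> bool" where
  "circulant A \<longleftrightarrow> dim_row A = dim_col A \<and> (\<exists>c. A = circ (dim_row A) c)"

definition all_ones_mat :: "nat \<Rightarrow> 'a :: one mat" where
  "all_ones_mat k = mat k k (\<lambda>_. 1)"

definition wheelC :: "nat \<Rightarrow> real mat" where
  "wheelC k = circ k (\<lambda>t. if t = 0 \<or> t = k - 1 then 1 else 0)"

text \<open>The matrix inverse (via Gauss-Jordan); meaningful for invertible square matrices.\<close>
definition inv_mat :: "real mat \<Rightarrow> real mat" where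
  "inv_mat A = the (mat_inverse A)"

end

theory Submission
  imports Defs "Jordan_Normal_Form.Determinant"
begin

(* A k x k matrix is circulant iff it commutes with the cyclic shift matrix P. Hence circulant
   matrices are closed under sums, products, transposes and inverses, and any two of them commute,
   as the first rows of both products agree. Now C C^T + I is circulant, symmetric and positive
   definite, so its inverse B is circulant and symmetric; N = (n-1) I - J is circulant and
   symmetric as well, so X = 2 B N is circulant, and symmetric because B N = N B. *)

lemma Suc_mod_diff_Suc_mod:
  "i < k \<Longrightarrow> j < k \<Longrightarrow> (Suc j mod k + k - Suc i mod k) mod k = (j + k - i) mod k"
  by (cases "Suc i = k"; cases "Suc j = k") (auto simp: mod_if)

lemma mod_diff_add_cancel: "i < k \<Longrightarrow> j < (k::nat) \<Longrightarrow> ((j + k - i) mod k + i) mod k = j"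
  by (cases "i \<le> j") (auto simp: mod_if)

lemma mod_diff_mod_diff: "l < k \<Longrightarrow> j < (k::nat) \<Longrightarrow> (j + k - (j + k - l) mod k) mod k = l"
  by (cases "l \<le> j") (auto simp: mod_if)

lemma Suc_mod_inj: "i < k \<Longrightarrow> j < k \<Longrightarrow> Suc i mod k = Suc j mod k \<longleftrightarrow> i = j"
  by (auto simp: mod_if split: if_splits)

lemma Suc_mod_surj:
  assumes "j < k" obtains i where "i < k" "j = Suc i mod k"
proof (cases j)
  case 0 with assms show ?thesis by (intro that[of "k - 1"]) auto
next
  case (Suc i) with assms show ?thesis by (intro that[of i]) auto
qed

lemma dim_circ [simp]: "dim_row (circ k c) = k" "dim_col (circ k c) = k"
  by (simp_all add: circ_def)

lemma circ_carrier [simp]: "circ k c \<in> carrier_mat k k"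
  by (simp add: carrier_matI)

lemma circulant_circ [simp]: "circulant (circ k c)"
  by (auto simp: circulant_def circ_def)

lemma circ_cong: "(\<And>t. t < k \<Longrightarrow> c t = d t) \<Longrightarrow> circ k c = circ k d"
  by (rule eq_matI) (auto simp: circ_def)

lemma circulant_eq_circ_first_row:
  assumes "circulant A"
  shows "A = circ (dim_row A) (\<lambda>t. A $$ (0, t))"
proof -
  obtain c where A: "A = circ (dim_row A) c"
    using assms by (auto simp: circulant_def)
  show ?thesis
    by (subst A, rule circ_cong) (subst A, auto simp: circ_def)
qed

lemma circulant_iff_shift_invariant:
  assumes A: "A \<in> carrier_mat k k"
  shows "circulant A \<longleftrightarrow> (\<forall>i<k. \<forall>j<k. A $$ (Suc i mod k, Suc j mod k) = A $$ (i, j))"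
proof
  assume "circulant A"
  then obtain c where "A = circ k c"
    using A by (auto simp: circulant_def)
  then show "\<forall>i<k. \<forall>j<k. A $$ (Suc i mod k, Suc j mod k) = A $$ (i, j)"
    by (simp add: circ_def Suc_mod_diff_Suc_mod)
next
  assume shift: "\<forall>i<k. \<forall>j<k. A $$ (Suc i mod k, Suc j mod k) = A $$ (i, j)"
  have iter: "A $$ ((i + m) mod k, (j + m) mod k) = A $$ (i, j)" if "i < k" "j < k" for i j m
  proof (induction m)
    case (Suc m)
    have "A $$ ((i + Suc m) mod k, (j + Suc m) mod k)
        = A $$ (Suc ((i + m) mod k) mod k, Suc ((j + m) mod k) mod k)"
      by (simp add: mod_Suc_eq)
    also have "\<dots> = A $$ ((i + m) mod k, (j + m) mod k)"
      using shift that by simp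
    finally show ?case using Suc.IH by simp
  qed (use that in simp)
  have "A = circ k (\<lambda>t. A $$ (0, t))"
  proof (rule eq_matI)
    fix i j assume "i < dim_row (circ k (\<lambda>t. A $$ (0, t)))" "j < dim_col (circ k (\<lambda>t. A $$ (0, t)))"
    then have i: "i < k" and j: "j < k" by simp_all
    have "A $$ (0, (j + k - i) mod k) = A $$ ((0 + i) mod k, ((j + k - i) mod k + i) mod k)"
      using iter[of 0 "(j + k - i) mod k" i] i by simp
    then show "A $$ (i, j) = circ k (\<lambda>t. A $$ (0, t)) $$ (i, j)"
      using i j by (simp add: circ_def mod_diff_add_cancel)
  qed (use A in auto)
  then show "circulant A"
    by (metis circulant_circ)
qed

definition shift_mat :: "nat \<Rightarrow> 'a :: semiring_1 mat" where
  "shift_mat k = mat k k (\<lambda>(i, j). if j = Suc i mod k then 1 else 0)"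

lemma dim_shift_mat [simp]: "dim_row (shift_mat k) = k" "dim_col (shift_mat k) = k"
  by (simp_all add: shift_mat_def)

lemma shift_mat_carrier [simp]: "shift_mat k \<in> carrier_mat k k"
  by (simp add: carrier_matI)

lemma shift_mat_mult_index:
  assumes "(M :: 'a :: semiring_1 mat) \<in> carrier_mat k n" "i < k" "j < n"
  shows "(shift_mat k * M) $$ (i, j) = M $$ (Suc i mod k, j)"
proof -
  have "(shift_mat k * M) $$ (i, j) = (\<Sum>l = 0..<k. (if l = Suc i mod k then 1 else 0) * M $$ (l, j))"
    using assms by (simp add: shift_mat_def scalar_prod_def)
  also have "\<dots> = (\<Sum>l = 0..<k. if l = Suc i mod k then M $$ (l, j) else 0)"
    by (rule sum.cong) auto
  finally show ?thesis
    using assms by simp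
qed

lemma mult_shift_mat_index:
  assumes "(M :: 'a :: semiring_1 mat) \<in> carrier_mat n k" "i < n" "j < k"
  shows "(M * shift_mat k) $$ (i, Suc j mod k) = M $$ (i, j)"
proof -
  have "(M * shift_mat k) $$ (i, Suc j mod k)
      = (\<Sum>l = 0..<k. M $$ (i, l) * (if Suc j mod k = Suc l mod k then 1 else 0))"
    using assms by (simp add: shift_mat_def scalar_prod_def)
  also have "\<dots> = (\<Sum>l = 0..<k. if l = j then M $$ (i, l) else 0)"
    using assms by (intro sum.cong) (auto simp: Suc_mod_inj)
  finally show ?thesis
    using assms by simp
qed

lemma circulant_iff_commute_shift_mat:
  assumes A: "(A :: 'a :: semiring_1 mat) \<in> carrier_mat k k"
  shows "circulant A \<longleftrightarrow> shift_mat k * A = A * shift_mat k"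
  unfolding circulant_iff_shift_invariant[OF A]
proof safe
  assume shift: "\<forall>i<k. \<forall>j<k. A $$ (Suc i mod k, Suc j mod k) = A $$ (i, j)"
  show "shift_mat k * A = A * shift_mat k"
  proof (rule eq_matI)
    fix i j' assume "i < dim_row (A * shift_mat k)" "j' < dim_col (A * shift_mat k)"
    then have i: "i < k" and "j' < k" using A by auto
    then obtain j where j: "j < k" and j': "j' = Suc j mod k"
      using Suc_mod_surj by blast
    have "(shift_mat k * A) $$ (i, Suc j mod k) = A $$ (Suc i mod k, Suc j mod k)"
      using A i j by (intro shift_mat_mult_index) auto
    also have "\<dots> = A $$ (i, j)"
      using shift i j by blast
    also have "\<dots> = (A * shift_mat k) $$ (i, Suc j mod k)"
      using A i j by (intro mult_shift_mat_index[symmetric])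
    finally show "(shift_mat k * A) $$ (i, j') = (A * shift_mat k) $$ (i, j')"
      unfolding j' .
  qed (use A in auto)
next
  fix i j assume comm: "shift_mat k * A = A * shift_mat k" and ij: "i < k" "j < k"
  have "A $$ (Suc i mod k, Suc j mod k) = (shift_mat k * A) $$ (i, Suc j mod k)"
    using A ij by (intro shift_mat_mult_index[symmetric]) auto
  also have "\<dots> = A $$ (i, j)"
    unfolding comm using A ij by (intro mult_shift_mat_index)
  finally show "A $$ (Suc i mod k, Suc j mod k) = A $$ (i, j)" .
qed

lemma all_ones_mat_carrier [simp]: "all_ones_mat k \<in> carrier_mat k k"
  by (simp add: all_ones_mat_def)

lemma transpose_all_ones_mat [simp]: "(all_ones_mat k)\<^sup>T = all_ones_mat k"
  by (rule eq_matI) (auto simp: all_ones_mat_def)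

lemma circulant_one [simp]: "circulant (1\<^sub>m k :: 'a :: {zero, one} mat)"
  by (simp add: circulant_iff_shift_invariant[OF one_carrier_mat] Suc_mod_inj)

lemma circulant_all_ones_mat [simp]: "circulant (all_ones_mat k)"
  by (simp add: circulant_iff_shift_invariant[of _ k] all_ones_mat_def carrier_matI)

lemma circulant_add:
  assumes "A \<in> carrier_mat k k" "B \<in> carrier_mat k k" "circulant A" "circulant B"
  shows "circulant (A + B)"
  using assms by (simp add: circulant_iff_shift_invariant[of _ k])

lemma circulant_minus:
  assumes "A \<in> carrier_mat k k" "B \<in> carrier_mat k k" "circulant A" "circulant B"
  shows "circulant (A - B)"
  using assms by (simp add: circulant_iff_shift_invariant[of _ k] minus_carrier_mat)

lemma circulant_smult:
  assumes "A \<in> carrier_mat k k" "circulant A"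
  shows "circulant (a \<cdot>\<^sub>m A)"
  using assms by (simp add: circulant_iff_shift_invariant[of _ k])

lemma circulant_transpose:
  assumes "A \<in> carrier_mat k k" "circulant A"
  shows "circulant A\<^sup>T"
  using assms by (simp add: circulant_iff_shift_invariant[of _ k])

lemma circulant_mult:
  fixes A B :: "'a :: semiring_1 mat"
  assumes A: "A \<in> carrier_mat k k" and B: "B \<in> carrier_mat k k"
    and "circulant A" "circulant B"
  shows "circulant (A * B)"
proof -
  let ?P = "shift_mat k :: 'a mat"
  have P: "?P \<in> carrier_mat k k"
    by simp
  have PA: "?P * A = A * ?P" and PB: "?P * B = B * ?P"
    using assms circulant_iff_commute_shift_mat by blast+
  have "?P * (A * B) = (A * ?P) * B"
    using assoc_mult_mat[OF P A B] by (simp add: PA)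
  also have "\<dots> = A * (B * ?P)"
    using assoc_mult_mat[OF A P B] by (simp add: PB)
  also have "\<dots> = (A * B) * ?P"
    using assoc_mult_mat[OF A B P] by simp
  finally show ?thesis
    using A B by (simp add: circulant_iff_commute_shift_mat[of _ k])
qed

lemma circulant_inverse:
  fixes A B :: "'a :: semiring_1 mat"
  assumes A: "A \<in> carrier_mat k k" and B: "B \<in> carrier_mat k k"
    and AB: "A * B = 1\<^sub>m k" and BA: "B * A = 1\<^sub>m k" and "circulant A"
  shows "circulant B"
proof -
  let ?P = "shift_mat k :: 'a mat"
  have PA: "?P * A = A * ?P"
    using assms circulant_iff_commute_shift_mat by blast
  have P: "?P \<in> carrier_mat k k"
    by simp
  have "?P * B = (B * A) * (?P * B)"
    using P B by (simp add: BA)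
  also have "\<dots> = B * ((A * ?P) * B)"
    using assoc_mult_mat[OF B A mult_carrier_mat[OF P B]] assoc_mult_mat[OF A P B] by simp
  also have "\<dots> = (B * ?P) * (A * B)"
    using assoc_mult_mat[OF P A B] assoc_mult_mat[OF B P mult_carrier_mat[OF A B]] by (simp flip: PA)
  also have "\<dots> = B * ?P"
    using P B by (simp add: AB)
  finally show ?thesis
    using B by (simp add: circulant_iff_commute_shift_mat[of _ k])
qed

lemma circ_mult_first_row:
  assumes "j < k"
  shows "(circ k a * circ k b) $$ (0, j) = (\<Sum>l = 0..<k. a l * b ((j + k - l) mod k))"
  using assms by (auto simp: circ_def scalar_prod_def intro!: sum.cong)

lemma circulant_mult_commute:
  fixes A B :: "'a :: comm_semiring_1 mat"
  assumes A: "A \<in> carrier_mat k k" and B: "B \<in> carrier_mat k k"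
    and "circulant A" "circulant B"
  shows "A * B = B * A"
proof -
  obtain a b where a: "A = circ k a" and b: "B = circ k b"
    using assms by (auto simp: circulant_def)
  have first_row: "(A * B) $$ (0, j) = (B * A) $$ (0, j)" if "j < k" for j
  proof -
    have "(\<Sum>l = 0..<k. a l * b ((j + k - l) mod k)) = (\<Sum>l = 0..<k. b l * a ((j + k - l) mod k))"
      using that
      by (intro sum.reindex_bij_witness[of _ "\<lambda>l. (j + k - l) mod k" "\<lambda>l. (j + k - l) mod k"])
        (auto simp: mod_diff_mod_diff mult.commute)
    then show ?thesis
      unfolding a b circ_mult_first_row[OF that] .
  qed
  have "circulant (A * B)" "circulant (B * A)"
    using assms circulant_mult by blast+
  then have "A * B = circ k (\<lambda>t. (A * B) $$ (0, t))" "B * A = circ k (\<lambda>t. (B * A) $$ (0, t))"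
    using A B circulant_eq_circ_first_row by fastforce+
  then show ?thesis
    using first_row circ_cong by metis
qed

lemma det_mult_transpose_add_one_neq_0:
  fixes C :: "real mat"
  assumes C: "C \<in> carrier_mat k m"
  shows "det (C * C\<^sup>T + 1\<^sub>m k) \<noteq> 0"
proof
  have CCT: "C * C\<^sup>T + 1\<^sub>m k \<in> carrier_mat k k"
    using C by simp
  assume "det (C * C\<^sup>T + 1\<^sub>m k) = 0"
  then obtain v where v: "v \<in> carrier_vec k" "v \<noteq> 0\<^sub>v k"
    and ker: "(C * C\<^sup>T + 1\<^sub>m k) *\<^sub>v v = 0\<^sub>v k"
    using det_0_iff_vec_prod_zero[OF CCT] by blast
  define w where "w = C\<^sup>T *\<^sub>v v"
  have w: "w \<in> carrier_vec m"
    using C v by (simp add: w_def)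
  have "0 = v \<bullet> ((C * C\<^sup>T + 1\<^sub>m k) *\<^sub>v v)"
    using ker v by simp
  also have "\<dots> = v \<bullet> (C *\<^sub>v w + v)"
    using C v by (simp add: add_mult_distrib_mat_vec[of _ k k] w_def)
  also have "\<dots> = v \<bullet> (C *\<^sub>v w) + v \<bullet> v"
    using C v w by (intro scalar_prod_add_distrib[of _ k]) auto
  also have "v \<bullet> (C *\<^sub>v w) = w \<bullet> w"
    using transpose_vec_mult_scalar[OF C w v(1)] by (simp add: w_def)
  finally have "w \<bullet>c w + v \<bullet>c v = 0"
    by simp
  then have "v \<bullet>c v = 0"
    using conjugate_square_ge_0_vec[of w] conjugate_square_ge_0_vec[of v] by linarith
  then show False
    using conjugate_square_eq_0_vec[OF v(1)] v(2) by blast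
qed

lemma inv_mat_inverse:
  assumes A: "A \<in> carrier_mat k k" and "det A \<noteq> 0"
  shows "inv_mat A \<in> carrier_mat k k" "A * inv_mat A = 1\<^sub>m k" "inv_mat A * A = 1\<^sub>m k"
proof -
  obtain B where B: "mat_inverse A = Some B"
  proof (cases "mat_inverse A")
    case None
    then show ?thesis
      using mat_inverse(1)[OF A None, of "()"] det_non_zero_imp_unit[OF A \<open>det A \<noteq> 0\<close>, of "()"]
      by blast
  qed
  then show "inv_mat A \<in> carrier_mat k k" "A * inv_mat A = 1\<^sub>m k" "inv_mat A * A = 1\<^sub>m k"
    using mat_inverse(2)[OF A B] by (simp_all add: inv_mat_def)
qed

lemma right_inverse_of_symmetric_is_symmetric:
  fixes A B :: "'a :: comm_semiring_1 mat"
  assumes A: "A \<in> carrier_mat k k" and B: "B \<in> carrier_mat k k"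
    and AT: "A\<^sup>T = A" and AB: "A * B = 1\<^sub>m k"
  shows "B\<^sup>T = B"
proof -
  have BTA: "B\<^sup>T * A = 1\<^sub>m k"
    using transpose_mult[OF A B] by (simp add: AT AB)
  have "B\<^sup>T = (B\<^sup>T * A) * B"
    using assoc_mult_mat[of "B\<^sup>T" k k A k B k] A B by (simp add: AB)
  then show ?thesis
    using B by (simp add: BTA)
qed

lemma transpose_smult_mat: "(a \<cdot>\<^sub>m A)\<^sup>T = a \<cdot>\<^sub>m A\<^sup>T"
  by (rule eq_matI) auto

theorem mainTheorem2:
  fixes n :: nat
  assumes "n \<ge> 4"
  defines "C \<equiv> wheelC (n - 1)"
  defines "X \<equiv> 2 \<cdot>\<^sub>m (inv_mat (C * C\<^sup>T + 1\<^sub>m (n - 1)) *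
                 (real (n - 1) \<cdot>\<^sub>m 1\<^sub>m (n - 1) - all_ones_mat (n - 1)))"
  defines "Y \<equiv> all_ones_mat (n - 1) + C\<^sup>T * X"
  shows "X\<^sup>T = X \<and> circulant X \<and> circulant Y"
proof -
  define k where "k = n - 1"
  define A where "A = C * C\<^sup>T + 1\<^sub>m k"
  define B where "B = inv_mat A"
  define N where "N = real k \<cdot>\<^sub>m 1\<^sub>m k - all_ones_mat k"
  have C: "C \<in> carrier_mat k k" "circulant C"
    by (simp_all add: C_def k_def wheelC_def)
  have A: "A \<in> carrier_mat k k" "circulant A" "A\<^sup>T = A"
    using C by (auto simp: A_def transpose_add[of _ k k] transpose_mult[of _ k k]
        intro!: circulant_add circulant_mult circulant_transpose)
  have "det A \<noteq> 0"
    using det_mult_transpose_add_one_neq_0[OF C(1)] by (simp add: A_def)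
  then have B: "B \<in> carrier_mat k k" "A * B = 1\<^sub>m k" "B * A = 1\<^sub>m k"
    using inv_mat_inverse[OF A(1)] by (simp_all add: B_def)
  have B_circ: "circulant B" and B_sym: "B\<^sup>T = B"
    using A B circulant_inverse right_inverse_of_symmetric_is_symmetric by blast+
  have N: "N \<in> carrier_mat k k" "circulant N" "N\<^sup>T = N"
    by (auto simp: N_def minus_carrier_mat transpose_minus[of _ k k] transpose_smult_mat
        intro!: circulant_minus circulant_smult)
  have X_eq: "X = 2 \<cdot>\<^sub>m (B * N)"
    by (simp add: X_def A_def B_def N_def k_def)
  have "(B * N)\<^sup>T = B * N"
    using B N B_circ B_sym by (simp add: transpose_mult[of _ k k] circulant_mult_commute[of N k B])
  moreover have X_circ: "circulant X"
    using B N B_circ by (auto simp: X_eq intro!: circulant_smult circulant_mult)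
  moreover have "circulant Y"
    unfolding Y_def k_def[symmetric] using C X_circ B N
    by (auto simp: X_eq intro!: circulant_add circulant_mult circulant_transpose)
  ultimately show ?thesis
    by (simp add: X_eq transpose_smult_mat)
qed

end
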